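(* Let $f$ be a convergent power series in $\mathbf z=(z_1,\dots,z_n)$ with $f(\mathbf 0)=0$. Let $P=(p_1,\dots,p_n)$ be a vertex of the dual Newton diagram $\Gamma^*(f)$ which is not strictly positive, and put $I(P)=\{i:p_i=0\}$. If $\mathbb C^{I(P)}$ is not a vanishing coordinate subspace of $f$, then $P$ is (up to the positive scaling with which vertices are defined) one of the standard basis vectors $e_1,\dots,e_n$.
   Context: Newton diagram $\Gamma_+(f)$: convex hull of $\bigcup_{c_\nu\ne0}(\nu+\mathbb R_{\ge0}^n)$ for $f=\sum c_\nu\mathbf z^\nu$. For a weight vector $P\in\mathbb R_{\ge0}^n$, $\Delta(P,f)$ is the face of $\Gamma_+(f)$ on which $\nu\mapsto\sum p_i\nu_i$ attains its minimum. $P\sim Q$ iff $\Delta(P,f)=\Delta(Q,f)$; the classes form a cone subdivision $\Gamma^*(f)$ of $\mathbb R_{\ge0}^n$, and a vertex is a non-zero weight vector spanning a one-dimensional cone of this subdivision. $P$ is strictly positive if all $p_i>0$. For $I\subset\{1,\dots,n\}$, $\mathbb C^I=\{\mathbf z: z_j=0 \text{ for } j\notin I\}$ and $f^I=f|_{\mathbb C^I}$; $\mathbb C^I$ is a vanishing coordinate subspace if $f^I\equiv0$. *)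

theory Defs
  imports "HOL-Analysis.Analysis"
begin

text \<open>A (formal) power series in the variables z_i, i :: 'n (a finite index type, so
  n = CARD('n)), is given by its coefficient function
  c :: ('n \<Rightarrow> nat) \<Rightarrow> complex, the exponent vector \<nu> being a function 'n \<Rightarrow> nat.\<close>

definition conv_power_series :: "(('n::finite \<Rightarrow> nat) \<Rightarrow> complex) \<Rightarrow> bool" where
  "conv_power_series c \<longleftrightarrow>
     (\<exists>r>0. (\<lambda>\<nu>. norm (c \<nu>) * r ^ (\<Sum>i\<in>UNIV. \<nu> i)) summable_on UNIV)"

definition exp_vec :: "('n::finite \<Rightarrow> nat) \<Rightarrow> real^'n" where
  "exp_vec \<nu> = (\<chi> i. real (\<nu> i))"

definition nonneg_orthant :: "(real^'n) set" where
  "nonneg_orthant = {x. \<forall>i. 0 \<le> x $ i}"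

definition newton_diagram :: "(('n::finite \<Rightarrow> nat) \<Rightarrow> complex) \<Rightarrow> (real^'n) set" where
  "newton_diagram c =
     convex hull (\<Union>\<nu>\<in>{\<nu>. c \<nu> \<noteq> 0}. (\<lambda>x. exp_vec \<nu> + x) ` nonneg_orthant)"

definition newton_face :: "real^'n \<Rightarrow> (('n::finite \<Rightarrow> nat) \<Rightarrow> complex) \<Rightarrow> (real^'n) set" where
  "newton_face P c =
     {x \<in> newton_diagram c. \<forall>y \<in> newton_diagram c. P \<bullet> x \<le> P \<bullet> y}"

definition weight_class :: "(('n::finite \<Rightarrow> nat) \<Rightarrow> complex) \<Rightarrow> real^'n \<Rightarrow> (real^'n) set" where
  "weight_class c P = {Q \<in> nonneg_orthant. newton_face Q c = newton_face P c}"

text \<open>P is a vertex of \<Gamma>^*(f): a nonzero weight vector whose cone of the subdivision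
  (its equivalence class, a relatively open cone) is one-dimensional, i.e. is the open
  ray spanned by P.\<close>
definition dual_vertex :: "(('n::finite \<Rightarrow> nat) \<Rightarrow> complex) \<Rightarrow> real^'n \<Rightarrow> bool" where
  "dual_vertex c P \<longleftrightarrow> P \<in> nonneg_orthant \<and> P \<noteq> 0 \<and>
     weight_class c P = {t *\<^sub>R P | t. t > 0}"

definition strictly_positive :: "real^'n \<Rightarrow> bool" where
  "strictly_positive P \<longleftrightarrow> (\<forall>i. P $ i > 0)"

definition zero_index_set :: "real^'n \<Rightarrow> 'n set" where
  "zero_index_set P = {i. P $ i = 0}"

text \<open>C^I is a vanishing coordinate subspace iff f restricted to C^I is identically 0,
  i.e. every monomial supported in I has zero coefficient.\<close>
definition vanishing_coord_subspace :: "(('n::finite \<Rightarrow> nat) \<Rightarrow> complex) \<Rightarrow> 'n set \<Rightarrow> bool" where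
  "vanishing_coord_subspace c I \<longleftrightarrow> (\<forall>\<nu>. (\<forall>j. j \<notin> I \<longrightarrow> \<nu> j = 0) \<longrightarrow> c \<nu> = 0)"

end

theory Submission
  imports Defs
begin

text \<open>If the coordinate subspace \<open>\<complex>\<^bsup>I(P)\<^esup>\<close> carries a monomial of \<open>f\<close>, then the minimum of
  \<open>\<nu> \<mapsto> \<langle>Q, \<nu>\<rangle>\<close> on the Newton diagram is 0 for every nonnegative weight \<open>Q\<close> with the
  same zero set as \<open>P\<close>, and the face where it is attained is cut out by the coordinates in the
  support of \<open>Q\<close>. So all such \<open>Q\<close> are equivalent to \<open>P\<close>. Since the class of a vertex is a
  single ray, rescaling one coordinate of \<open>P\<close> must not leave the ray, which forces \<open>P\<close> to
  have only one nonzero coordinate.\<close>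

lemma convex_nonneg_orthant: "convex (nonneg_orthant :: (real^'n) set)"
  unfolding convex_def nonneg_orthant_def by auto

lemma newton_diagram_subset_nonneg_orthant: "newton_diagram c \<subseteq> nonneg_orthant"
  unfolding newton_diagram_def
proof (rule hull_minimal)
  show "(\<Union>\<nu>\<in>{\<nu>. c \<nu> \<noteq> 0}. (\<lambda>x. exp_vec \<nu> + x) ` nonneg_orthant) \<subseteq> nonneg_orthant"
    by (auto simp: nonneg_orthant_def exp_vec_def)
qed (rule convex_nonneg_orthant)

lemma exp_vec_in_newton_diagram:
  assumes "c \<nu> \<noteq> 0"
  shows "exp_vec \<nu> \<in> newton_diagram c"
proof -
  have "exp_vec \<nu> \<in> (\<lambda>x. exp_vec \<nu> + x) ` nonneg_orthant"
    by (rule image_eqI[of _ _ 0]) (auto simp: nonneg_orthant_def)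
  then show ?thesis
    unfolding newton_diagram_def using assms by (blast intro: hull_inc)
qed

lemma inner_nonneg_orthant_nonneg:
  fixes Q x :: "real^'n"
  assumes "Q \<in> nonneg_orthant" "x \<in> nonneg_orthant"
  shows "0 \<le> Q \<bullet> x"
  using assms by (auto simp: inner_vec_def nonneg_orthant_def intro!: sum_nonneg)

lemma inner_nonneg_orthant_eq_0_iff:
  fixes Q x :: "real^'n"
  assumes "Q \<in> nonneg_orthant" "x \<in> nonneg_orthant"
  shows "Q \<bullet> x = 0 \<longleftrightarrow> (\<forall>j. Q $ j \<noteq> 0 \<longrightarrow> x $ j = 0)"
proof -
  have "\<And>i. 0 \<le> Q $ i * x $ i"
    using assms by (auto simp: nonneg_orthant_def)
  then show ?thesis
    using sum_nonneg_eq_0_iff[of UNIV "\<lambda>i. Q $ i * x $ i"] by (auto simp: inner_vec_def)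
qed

lemma newton_face_eq_coordinate_section:
  fixes Q :: "real^'n"
  assumes Q: "Q \<in> nonneg_orthant" and "c \<nu> \<noteq> 0"
    and \<nu>: "\<forall>j. Q $ j \<noteq> 0 \<longrightarrow> \<nu> j = 0"
  shows "newton_face Q c = {x \<in> newton_diagram c. \<forall>j. Q $ j \<noteq> 0 \<longrightarrow> x $ j = 0}"
proof -
  note diagram_nonneg = newton_diagram_subset_nonneg_orthant[of c]
  have \<nu>_diagram: "exp_vec \<nu> \<in> newton_diagram c"
    using \<open>c \<nu> \<noteq> 0\<close> by (rule exp_vec_in_newton_diagram)
  have "Q \<bullet> exp_vec \<nu> = 0"
    using inner_nonneg_orthant_eq_0_iff[OF Q] \<nu> \<nu>_diagram diagram_nonneg
    by (auto simp: exp_vec_def)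
  then have "newton_face Q c = {x \<in> newton_diagram c. Q \<bullet> x = 0}"
    using \<nu>_diagram inner_nonneg_orthant_nonneg[OF Q] diagram_nonneg
    unfolding newton_face_def by (smt (verit) Collect_cong subset_iff)
  also have "\<dots> = {x \<in> newton_diagram c. \<forall>j. Q $ j \<noteq> 0 \<longrightarrow> x $ j = 0}"
    using inner_nonneg_orthant_eq_0_iff[OF Q] diagram_nonneg by blast
  finally show ?thesis .
qed

lemma weight_class_same_zero_index_set:
  fixes P Q :: "real^'n"
  assumes P: "P \<in> nonneg_orthant" and Q: "Q \<in> nonneg_orthant"
    and zeros: "zero_index_set Q = zero_index_set P"
    and "c \<nu> \<noteq> 0" and \<nu>: "\<forall>j. j \<notin> zero_index_set P \<longrightarrow> \<nu> j = 0"
  shows "Q \<in> weight_class c P"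
proof -
  have same_support: "Q $ j \<noteq> 0 \<longleftrightarrow> P $ j \<noteq> 0" for j
    using zeros unfolding zero_index_set_def by blast
  have \<nu>P: "\<forall>j. P $ j \<noteq> 0 \<longrightarrow> \<nu> j = 0"
    using \<nu> unfolding zero_index_set_def by simp
  then have \<nu>Q: "\<forall>j. Q $ j \<noteq> 0 \<longrightarrow> \<nu> j = 0"
    using same_support by blast
  have "newton_face Q c = newton_face P c"
    unfolding newton_face_eq_coordinate_section[of Q c \<nu>, OF Q \<open>c \<nu> \<noteq> 0\<close> \<nu>Q]
      newton_face_eq_coordinate_section[of P c \<nu>, OF P \<open>c \<nu> \<noteq> 0\<close> \<nu>P]
    by (simp only: same_support)
  then show ?thesis
    using Q unfolding weight_class_def by simp
qed

lemma dual_vertex_support_unique: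
  fixes P :: "real^'n"
  assumes vertex: "dual_vertex c P"
    and "c \<nu> \<noteq> 0" and \<nu>: "\<forall>j. j \<notin> zero_index_set P \<longrightarrow> \<nu> j = 0"
    and "P $ i \<noteq> 0" "P $ j \<noteq> 0"
  shows "i = j"
proof (rule ccontr)
  assume "i \<noteq> j"
  have P: "P \<in> nonneg_orthant" and ray: "weight_class c P = {t *\<^sub>R P | t. t > 0}"
    using vertex unfolding dual_vertex_def by auto
  define Q :: "real^'n" where "Q = (\<chi> k. if k = i then 2 * P $ k else P $ k)"
  have "Q \<in> nonneg_orthant"
    using P by (auto simp: Q_def nonneg_orthant_def)
  moreover have "zero_index_set Q = zero_index_set P"
    by (auto simp: Q_def zero_index_set_def)
  ultimately have "Q \<in> weight_class c P"
    using weight_class_same_zero_index_set P \<open>c \<nu> \<noteq> 0\<close> \<nu> by blast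
  then obtain t where "Q = t *\<^sub>R P"
    using ray by auto
  then have "Q $ i = t * P $ i" "Q $ j = t * P $ j"
    by simp_all
  then have "2 * P $ i = t * P $ i" "P $ j = t * P $ j"
    using \<open>i \<noteq> j\<close> by (simp_all add: Q_def)
  then show False
    using \<open>P $ i \<noteq> 0\<close> \<open>P $ j \<noteq> 0\<close> by simp
qed

theorem proposition8:
  fixes c :: "('n::finite \<Rightarrow> nat) \<Rightarrow> complex" and P :: "real^'n"
  assumes "conv_power_series c"
    and "c (\<lambda>_. 0) = 0"
    and "dual_vertex c P"
    and "\<not> strictly_positive P"
    and "\<not> vanishing_coord_subspace c (zero_index_set P)"
  shows "\<exists>i. \<exists>t>0. P = t *\<^sub>R axis i 1"
proof -
  obtain \<nu> where "c \<nu> \<noteq> 0" and \<nu>: "\<forall>j. j \<notin> zero_index_set P \<longrightarrow> \<nu> j = 0"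
    using assms(5) unfolding vanishing_coord_subspace_def by auto
  have "P \<in> nonneg_orthant" "P \<noteq> 0"
    using assms(3) unfolding dual_vertex_def by auto
  then obtain i where "P $ i > 0"
    by (force simp: vec_eq_iff nonneg_orthant_def less_le)
  moreover have "P $ j = 0" if "j \<noteq> i" for j
    using dual_vertex_support_unique[OF assms(3) \<open>c \<nu> \<noteq> 0\<close> \<nu>, of i j] that \<open>P $ i > 0\<close> by auto
  then have "P = P $ i *\<^sub>R axis i 1"
    by (auto simp: vec_eq_iff axis_def)
  ultimately show ?thesis
    by blast
qed

end
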